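(* Consider the two-good panel bundle model with nonseparable utility described in the context, and suppose the complementarity, exclusion, stationarity and monotonicity assumptions stated there hold. Then for any $(x_s,x_t)$ and $s\ne t\le T$: (1) for each $j\in\mathcal C$: if $P_s(\{j\}\mid x_s,x_t)>P_t(\{j\}\mid x_s,x_t)$, then $(-1)^{\mathbb 1[j\in D_A]}\Delta_{s,t}\delta_A<0$ or $(-1)^{\mathbb 1[j\in D_B]}\Delta_{s,t}\delta_B<0$; (2) for each $\ell\in\{A,B\}$ with $\ell_{-1}$ the other good: if $P_s(D_\ell\mid x_s,x_t)>P_t(D_\ell\mid x_s,x_t)$, then $\Delta_{s,t}\delta_\ell>0$ or $\operatorname{sign}(\Gamma_0)\,\Delta_{s,t}\delta_{\ell_{-1}}>0$.
   Context: Panel model with two goods $A,B$, consumers $i$, periods $t=1,\dots,T$, $T\ge2$; choice set $\mathcal C=\{A,B,AB,O\}$ ($A$ = only $A$, $B$ = only $B$, $AB$ = both, $O$ = outside option). Utilities: $u_{ijt}=u(X_{ijt}'\beta_0,\alpha_{ij},\epsilon_{ijt})$ for $j\in\{A,B\}$, where $u$ is a possibly unknown, possibly nonseparable function, $X_{ijt}$ observed covariates, $\alpha_{ij}$ unobserved time-invariant fixed effects, $\epsilon_{ijt}$ unobserved shocks; $u_{iOt}=0$; $u_{iABt}=u_{iAt}+u_{iBt}+\Gamma_{it}$. $Y_{it}$ is the utility-maximizing choice; ties have probability zero. $X_{it}=(X_{iAt},X_{iBt})$, $\alpha_i=(\alpha_{iA},\alpha_{iB})$, $\epsilon_{it}=(\epsilon_{iAt},\epsilon_{iBt})$.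 Complementarity assumption: $\Gamma_{it}=\Gamma(Z_i)$ for an observed time-invariant $Z_i$; $Z_i$ is suppressed and $\Gamma_0$ denotes $\Gamma(Z_i)$. Exclusion: some component of $X_{it}$ not in $Z_i$ has nonzero coefficient. Stationarity: for all $s,t\le T$, $\epsilon_{is}\mid(X_{is},X_{it},Z_i,\alpha_i)\overset{d}{=}\epsilon_{it}\mid(X_{is},X_{it},Z_i,\alpha_i)$. Monotonicity: for every $(\alpha,\epsilon)$, $u(\tilde\delta,\alpha,\epsilon)\ge u(\delta,\alpha,\epsilon)$ whenever $\tilde\delta\ge\delta$. Notation: $P_t(K\mid x_s,x_t)=\Pr(Y_{it}\in K\mid X_{is}=x_s,X_{it}=x_t)$; $D_\ell=\{\ell,AB\}$; $\delta_{\ell t}=x_{\ell t}'\beta_0$; $\Delta_{s,t}\delta_\ell=\delta_{\ell s}-\delta_{\ell t}$; $\operatorname{sign}(x)=\mathbb 1\{x>0\}-\mathbb 1\{x<0\}$. *)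

theory Defs
  imports "HOL-Probability.Probability"
begin

datatype good = GA | GB
datatype choice = cA | cB | cAB | cO

fun other :: "good \<Rightarrow> good" where
  "other GA = GB" | "other GB = GA"

fun single :: "good \<Rightarrow> choice" where
  "single GA = cA" | "single GB = cB"

definition D :: "good \<Rightarrow> choice set" where
  "D l = {single l, cAB}"

fun util :: "real \<Rightarrow> real \<Rightarrow> real \<Rightarrow> choice \<Rightarrow> real" where
  "util a b g cA = a"
| "util a b g cB = b"
| "util a b g cAB = a + b + g"
| "util a b g cO = 0"

definition chosen :: "(choice \<Rightarrow> real) \<Rightarrow> choice \<Rightarrow> bool" where
  "chosen v j \<longleftrightarrow> (\<forall>k. k \<noteq> j \<longrightarrow> v k < v j)"

text \<open>Utility vector in a period with index deltas delta (per good), fixed effects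
  alpha = (alpha_A, alpha_B) and shocks eps = (eps_A, eps_B).\<close>
definition uvec :: "(real \<Rightarrow> 'a \<Rightarrow> 'e \<Rightarrow> real) \<Rightarrow> real \<Rightarrow> (good \<Rightarrow> real)
    \<Rightarrow> 'a \<times> 'a \<Rightarrow> 'e \<times> 'e \<Rightarrow> choice \<Rightarrow> real" where
  "uvec u \<Gamma> \<delta> al ep = util (u (\<delta> GA) (fst al) (fst ep)) (u (\<delta> GB) (snd al) (snd ep)) \<Gamma>"

definition Pch :: "'w measure \<Rightarrow> (real \<Rightarrow> 'a \<Rightarrow> 'e \<Rightarrow> real) \<Rightarrow> real \<Rightarrow> (good \<Rightarrow> real)
    \<Rightarrow> ('w \<Rightarrow> 'a \<times> 'a) \<Rightarrow> ('w \<Rightarrow> 'e \<times> 'e) \<Rightarrow> choice set \<Rightarrow> real" where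
  "Pch M u \<Gamma> \<delta> alpha eps K =
     measure M {\<omega> \<in> space M. \<exists>j\<in>K. chosen (uvec u \<Gamma> \<delta> (alpha \<omega>) (eps \<omega>)) j}"

end

theory Submission imports Defs begin

(* Stationarity lets the period-s choice probability be computed with the period-t shocks, so
   the two probabilities differ only through the index vector. By monotonicity of u, a change of
   the index moves the utility of each good in the direction of its own index. If no such move
   makes the choice j (respectively the set D_l, given the sign of the complementarity) less
   attractive, every shock that selects it at the period-s index still selects it at the
   period-t index, so P_s <= P_t; the proposition is the contrapositive. *)

instance choice :: countable by countable_datatype

lemma chosen_iff_cases: "chosen v j \<longleftrightarrow> (\<forall>k\<in>{cA, cB, cAB, cO}. k \<noteq> j \<longrightarrow> v k < v j)"
proof -
  have "k \<in> {cA, cB, cAB, cO}" for k by (cases k) auto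
  then show ?thesis unfolding chosen_def by blast
qed

lemma ex_chosen_if_inj:
  assumes "inj (v :: choice \<Rightarrow> real)"
  shows "\<exists>j. chosen v j"
proof -
  have univ: "UNIV = {cA, cB, cAB, cO}" by (auto intro: choice.exhaust)
  have fin: "finite (range v)" by (simp add: univ)
  obtain j where j: "v j = Max (range v)"
    using Max_in[OF fin] by auto
  have "v k < v j" if "k \<noteq> j" for k
  proof -
    have "v k \<le> v j" using j fin by simp
    moreover have "v k \<noteq> v j" using assms that by (meson injD)
    ultimately show ?thesis by simp
  qed
  then show ?thesis
    unfolding chosen_def by blast
qed

lemma chosen_util_mono:
  fixes v w :: "good \<Rightarrow> real"
  assumes "chosen (util (v GA) (v GB) g) j"
    and "\<And>l. j \<in> D l \<Longrightarrow> v l \<le> w l"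
    and "\<And>l. j \<notin> D l \<Longrightarrow> w l \<le> v l"
  shows "chosen (util (w GA) (w GB) g) j"
  using assms(1) assms(2,3)[of GA] assms(2,3)[of GB]
  by (cases j) (auto simp: chosen_iff_cases D_def)

lemma ex_chosen_in_D_mono:
  fixes v w :: "good \<Rightarrow> real"
  assumes chosen: "chosen (util (v GA) (v GB) g) j" and "j \<in> D l"
    and own: "v l \<le> w l"
    and complements: "g > 0 \<Longrightarrow> v (other l) \<le> w (other l)"
    and substitutes: "g < 0 \<Longrightarrow> w (other l) \<le> v (other l)"
    and "inj (util (w GA) (w GB) g)"
  shows "\<exists>k\<in>D l. chosen (util (w GA) (w GB) g) k"
proof -
  obtain k where k: "chosen (util (w GA) (w GB) g) k"
    using ex_chosen_if_inj[OF \<open>inj _\<close>] by blast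
  have "k \<in> D l"
  proof (rule ccontr)
    assume "k \<notin> D l"
    then have "k = single (other l) \<or> k = cO" and "j = single l \<or> j = cAB"
      using \<open>j \<in> D l\<close> by (cases l; cases k; auto simp: D_def)+
    with chosen k own complements substitutes show False
      by (cases l; cases "g > 0"; cases "g < 0") (auto simp: chosen_iff_cases)
  qed
  with k show ?thesis by blast
qed

fun component :: "good \<Rightarrow> 'x \<times> 'x \<Rightarrow> 'x" where
  "component GA = fst"
| "component GB = snd"

definition good_util :: "(real \<Rightarrow> 'a \<Rightarrow> 'e \<Rightarrow> real) \<Rightarrow> (good \<Rightarrow> real) \<Rightarrow> 'a \<times> 'a
    \<Rightarrow> 'e \<times> 'e \<Rightarrow> good \<Rightarrow> real" where
  "good_util u \<delta> al ep l = u (\<delta> l) (component l al) (component l ep)"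

lemma uvec_eq_util_good_util:
  "uvec u g \<delta> al ep = util (good_util u \<delta> al ep GA) (good_util u \<delta> al ep GB) g"
  by (simp add: uvec_def good_util_def)

lemma good_util_mono:
  assumes "\<And>a e. mono (\<lambda>d. u d a e)" and "\<delta>1 l \<le> \<delta>2 l"
  shows "good_util u \<delta>1 al ep l \<le> good_util u \<delta>2 al ep l"
  unfolding good_util_def using assms by (auto dest: monoD)

lemma chosen_uvec_mono:
  assumes mono: "\<And>a e. mono (\<lambda>d. u d a e)"
    and "chosen (uvec u g \<delta>1 al ep) j"
    and "\<And>l. j \<in> D l \<Longrightarrow> \<delta>1 l \<le> \<delta>2 l" and "\<And>l. j \<notin> D l \<Longrightarrow> \<delta>2 l \<le> \<delta>1 l"
  shows "chosen (uvec u g \<delta>2 al ep) j"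
  using chosen_util_mono[of "good_util u \<delta>1 al ep" g j "good_util u \<delta>2 al ep"]
    assms(2-4) good_util_mono[where u = u, OF mono]
  by (simp add: uvec_eq_util_good_util)

lemma ex_chosen_uvec_in_D_mono:
  assumes mono: "\<And>a e. mono (\<lambda>d. u d a e)"
    and "chosen (uvec u g \<delta>1 al ep) j" and "j \<in> D l"
    and "\<delta>1 l \<le> \<delta>2 l"
    and "g > 0 \<Longrightarrow> \<delta>1 (other l) \<le> \<delta>2 (other l)"
    and "g < 0 \<Longrightarrow> \<delta>2 (other l) \<le> \<delta>1 (other l)"
    and "inj (uvec u g \<delta>2 al ep)"
  shows "\<exists>k\<in>D l. chosen (uvec u g \<delta>2 al ep) k"
  using ex_chosen_in_D_mono[of "good_util u \<delta>1 al ep" g j l "good_util u \<delta>2 al ep"]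
    assms(2-7) good_util_mono[where u = u, OF mono]
  by (simp add: uvec_eq_util_good_util)

lemma measurable_uvec:
  assumes "\<And>d. (\<lambda>(a, e). u d a e) \<in> borel_measurable (Ma \<Otimes>\<^sub>M Me)"
  shows "(\<lambda>x. uvec u g \<delta> (fst x) (snd x) k) \<in> borel_measurable ((Ma \<Otimes>\<^sub>M Ma) \<Otimes>\<^sub>M (Me \<Otimes>\<^sub>M Me))"
proof -
  have "(\<lambda>x. (fst (fst x), fst (snd x))) \<in> measurable ((Ma \<Otimes>\<^sub>M Ma) \<Otimes>\<^sub>M (Me \<Otimes>\<^sub>M Me)) (Ma \<Otimes>\<^sub>M Me)"
    and "(\<lambda>x. (snd (fst x), snd (snd x))) \<in> measurable ((Ma \<Otimes>\<^sub>M Ma) \<Otimes>\<^sub>M (Me \<Otimes>\<^sub>M Me)) (Ma \<Otimes>\<^sub>M Me)"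
    by measurable
  from this[THEN measurable_compose, OF assms] show ?thesis
    by (cases k) (auto simp: uvec_def)
qed

lemma sets_chosen_event:
  assumes "\<And>d. (\<lambda>(a, e). u d a e) \<in> borel_measurable (Ma \<Otimes>\<^sub>M Me)"
  shows "{x \<in> space ((Ma \<Otimes>\<^sub>M Ma) \<Otimes>\<^sub>M (Me \<Otimes>\<^sub>M Me)). \<exists>j\<in>K. chosen (uvec u g \<delta> (fst x) (snd x)) j}
     \<in> sets ((Ma \<Otimes>\<^sub>M Ma) \<Otimes>\<^sub>M (Me \<Otimes>\<^sub>M Me))"
  using measurable_uvec[OF assms] unfolding chosen_def by measurable

lemma Pch_eq_measure_distr:
  assumes "alpha \<in> measurable M (Ma \<Otimes>\<^sub>M Ma)" and "eps \<in> measurable M (Me \<Otimes>\<^sub>M Me)"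
    and "\<And>d. (\<lambda>(a, e). u d a e) \<in> borel_measurable (Ma \<Otimes>\<^sub>M Me)"
  shows "Pch M u g \<delta> alpha eps K
    = measure (distr M ((Ma \<Otimes>\<^sub>M Ma) \<Otimes>\<^sub>M (Me \<Otimes>\<^sub>M Me)) (\<lambda>\<omega>. (alpha \<omega>, eps \<omega>)))
        {x \<in> space ((Ma \<Otimes>\<^sub>M Ma) \<Otimes>\<^sub>M (Me \<Otimes>\<^sub>M Me)). \<exists>j\<in>K. chosen (uvec u g \<delta> (fst x) (snd x)) j}"
proof -
  have meas: "(\<lambda>\<omega>. (alpha \<omega>, eps \<omega>)) \<in> measurable M ((Ma \<Otimes>\<^sub>M Ma) \<Otimes>\<^sub>M (Me \<Otimes>\<^sub>M Me))"
    using assms(1,2) by measurable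
  show ?thesis
    using measurable_space[OF meas]
    by (subst measure_distr[OF meas sets_chosen_event[OF assms(3)]])
      (auto simp: Pch_def intro!: arg_cong[where f = "measure M"])
qed

lemma Pch_stationary:
  assumes "alpha \<in> measurable M (Ma \<Otimes>\<^sub>M Ma)"
    and "eps_s \<in> measurable M (Me \<Otimes>\<^sub>M Me)" and "eps_t \<in> measurable M (Me \<Otimes>\<^sub>M Me)"
    and "\<And>d. (\<lambda>(a, e). u d a e) \<in> borel_measurable (Ma \<Otimes>\<^sub>M Me)"
    and "distr M ((Ma \<Otimes>\<^sub>M Ma) \<Otimes>\<^sub>M (Me \<Otimes>\<^sub>M Me)) (\<lambda>\<omega>. (alpha \<omega>, eps_s \<omega>))
       = distr M ((Ma \<Otimes>\<^sub>M Ma) \<Otimes>\<^sub>M (Me \<Otimes>\<^sub>M Me)) (\<lambda>\<omega>. (alpha \<omega>, eps_t \<omega>))"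
  shows "Pch M u g \<delta> alpha eps_s K = Pch M u g \<delta> alpha eps_t K"
  using assms by (simp add: Pch_eq_measure_distr)

lemma sets_Pch_event:
  assumes "alpha \<in> measurable M (Ma \<Otimes>\<^sub>M Ma)" and "eps \<in> measurable M (Me \<Otimes>\<^sub>M Me)"
    and "\<And>d. (\<lambda>(a, e). u d a e) \<in> borel_measurable (Ma \<Otimes>\<^sub>M Me)"
  shows "{\<omega> \<in> space M. \<exists>j\<in>K. chosen (uvec u g \<delta> (alpha \<omega>) (eps \<omega>)) j} \<in> sets M"
proof -
  have "(\<lambda>\<omega>. (alpha \<omega>, eps \<omega>)) \<in> measurable M ((Ma \<Otimes>\<^sub>M Ma) \<Otimes>\<^sub>M (Me \<Otimes>\<^sub>M Me))"
    using assms(1,2) by measurable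
  from measurable_compose[OF this measurable_uvec[OF assms(3)]]
  have "(\<lambda>\<omega>. uvec u g \<delta> (alpha \<omega>) (eps \<omega>) k) \<in> borel_measurable M" for k
    by simp
  then show ?thesis
    unfolding chosen_def by measurable
qed

lemma Pch_mono_AE:
  assumes "finite_measure M"
    and "alpha \<in> measurable M (Ma \<Otimes>\<^sub>M Ma)" and "eps \<in> measurable M (Me \<Otimes>\<^sub>M Me)"
    and "\<And>d. (\<lambda>(a, e). u d a e) \<in> borel_measurable (Ma \<Otimes>\<^sub>M Me)"
    and "AE \<omega> in M. (\<exists>j\<in>K. chosen (uvec u g \<delta>1 (alpha \<omega>) (eps \<omega>)) j)
                 \<longrightarrow> (\<exists>j\<in>K. chosen (uvec u g \<delta>2 (alpha \<omega>) (eps \<omega>)) j)"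
  shows "Pch M u g \<delta>1 alpha eps K \<le> Pch M u g \<delta>2 alpha eps K"
  unfolding Pch_def
  using assms(5) sets_Pch_event[OF assms(2-4)]
  by (intro finite_measure.finite_measure_mono_AE[OF assms(1)]) (auto elim: AE_mp)

lemma Pch_single_mono:
  assumes "finite_measure M"
    and "alpha \<in> measurable M (Ma \<Otimes>\<^sub>M Ma)" and "eps \<in> measurable M (Me \<Otimes>\<^sub>M Me)"
    and "\<And>d. (\<lambda>(a, e). u d a e) \<in> borel_measurable (Ma \<Otimes>\<^sub>M Me)"
    and "\<And>a e. mono (\<lambda>d. u d a e)"
    and "\<And>l. j \<in> D l \<Longrightarrow> \<delta>1 l \<le> \<delta>2 l" and "\<And>l. j \<notin> D l \<Longrightarrow> \<delta>2 l \<le> \<delta>1 l"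
  shows "Pch M u g \<delta>1 alpha eps {j} \<le> Pch M u g \<delta>2 alpha eps {j}"
  using chosen_uvec_mono[where u = u, OF assms(5) _ assms(6,7)]
  by (intro Pch_mono_AE[OF assms(1-4)] AE_I2) simp

lemma Pch_D_mono:
  assumes "finite_measure M"
    and "alpha \<in> measurable M (Ma \<Otimes>\<^sub>M Ma)" and "eps \<in> measurable M (Me \<Otimes>\<^sub>M Me)"
    and "\<And>d. (\<lambda>(a, e). u d a e) \<in> borel_measurable (Ma \<Otimes>\<^sub>M Me)"
    and "\<And>a e. mono (\<lambda>d. u d a e)"
    and no_ties: "AE \<omega> in M. inj (uvec u g \<delta>2 (alpha \<omega>) (eps \<omega>))"
    and "\<delta>1 l \<le> \<delta>2 l"
    and "g > 0 \<Longrightarrow> \<delta>1 (other l) \<le> \<delta>2 (other l)"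
    and "g < 0 \<Longrightarrow> \<delta>2 (other l) \<le> \<delta>1 (other l)"
  shows "Pch M u g \<delta>1 alpha eps (D l) \<le> Pch M u g \<delta>2 alpha eps (D l)"
proof (rule Pch_mono_AE[OF assms(1-4)], rule AE_mp[OF no_ties], intro AE_I2 impI)
  fix \<omega>
  assume "inj (uvec u g \<delta>2 (alpha \<omega>) (eps \<omega>))"
    and "\<exists>j\<in>D l. chosen (uvec u g \<delta>1 (alpha \<omega>) (eps \<omega>)) j"
  then show "\<exists>j\<in>D l. chosen (uvec u g \<delta>2 (alpha \<omega>) (eps \<omega>)) j"
    using ex_chosen_uvec_in_D_mono[where u = u and g = g, OF assms(5) _ _ assms(7-9)] by meson
qed

(* The exclusion restriction, the period indices and the absence of ties in period s are not
   needed: they matter for point identification, not for these sign restrictions. *)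

theorem proposition6:
  fixes M :: "'w measure"
    and Ma :: "'a measure" and Me :: "'e measure"
    and u :: "real \<Rightarrow> 'a \<Rightarrow> 'e \<Rightarrow> real"
    and alpha :: "'w \<Rightarrow> 'a \<times> 'a"
    and eps_s eps_t :: "'w \<Rightarrow> 'e \<times> 'e"
    and \<beta>0 :: "real ^ 'k"
    and ZI :: "'k set"
    and xs xt :: "good \<Rightarrow> real ^ 'k"
    and \<Gamma>0 :: real
    and T s t :: nat
  assumes prob: "prob_space M"
    and periods: "T \<ge> 2" "s \<in> {1..T}" "t \<in> {1..T}" "s \<noteq> t"
    and meas_alpha: "alpha \<in> measurable M (Ma \<Otimes>\<^sub>M Ma)"
    and meas_eps_s: "eps_s \<in> measurable M (Me \<Otimes>\<^sub>M Me)"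
    and meas_eps_t: "eps_t \<in> measurable M (Me \<Otimes>\<^sub>M Me)"
    and meas_u: "\<And>d. (\<lambda>(a, e). u d a e) \<in> borel_measurable (Ma \<Otimes>\<^sub>M Me)"
    and exclusion: "\<exists>k. k \<notin> ZI \<and> \<beta>0 $ k \<noteq> 0"
    and stationarity:
      "distr M ((Ma \<Otimes>\<^sub>M Ma) \<Otimes>\<^sub>M (Me \<Otimes>\<^sub>M Me)) (\<lambda>\<omega>. (alpha \<omega>, eps_s \<omega>))
     = distr M ((Ma \<Otimes>\<^sub>M Ma) \<Otimes>\<^sub>M (Me \<Otimes>\<^sub>M Me)) (\<lambda>\<omega>. (alpha \<omega>, eps_t \<omega>))"
    and monotone: "\<And>a e. mono (\<lambda>d. u d a e)"
    and no_ties_s: "AE \<omega> in M. inj (uvec u \<Gamma>0 (\<lambda>l. xs l \<bullet> \<beta>0) (alpha \<omega>) (eps_s \<omega>))"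
    and no_ties_t: "AE \<omega> in M. inj (uvec u \<Gamma>0 (\<lambda>l. xt l \<bullet> \<beta>0) (alpha \<omega>) (eps_t \<omega>))"
  shows
    "(\<forall>j. Pch M u \<Gamma>0 (\<lambda>l. xs l \<bullet> \<beta>0) alpha eps_s {j}
            > Pch M u \<Gamma>0 (\<lambda>l. xt l \<bullet> \<beta>0) alpha eps_t {j}
          \<longrightarrow> (-1::real) ^ (if j \<in> D GA then 1 else 0) * (xs GA \<bullet> \<beta>0 - xt GA \<bullet> \<beta>0) < 0
            \<or> (-1::real) ^ (if j \<in> D GB then 1 else 0) * (xs GB \<bullet> \<beta>0 - xt GB \<bullet> \<beta>0) < 0)
   \<and> (\<forall>l. Pch M u \<Gamma>0 (\<lambda>l. xs l \<bullet> \<beta>0) alpha eps_s (D l)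
            > Pch M u \<Gamma>0 (\<lambda>l. xt l \<bullet> \<beta>0) alpha eps_t (D l)
          \<longrightarrow> xs l \<bullet> \<beta>0 - xt l \<bullet> \<beta>0 > 0
            \<or> sgn \<Gamma>0 * (xs (other l) \<bullet> \<beta>0 - xt (other l) \<bullet> \<beta>0) > 0)"
proof -
  let ?\<delta>s = "\<lambda>l. xs l \<bullet> \<beta>0" and ?\<delta>t = "\<lambda>l. xt l \<bullet> \<beta>0"
  have fin: "finite_measure M"
    using prob by (rule prob_space.finite_measure)
  have shift: "Pch M u \<Gamma>0 ?\<delta>s alpha eps_s K = Pch M u \<Gamma>0 ?\<delta>s alpha eps_t K" for K
    using meas_alpha meas_eps_s meas_eps_t meas_u stationarity by (rule Pch_stationary)
  show ?thesis
  proof (intro conjI allI impI)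
    fix j :: choice
    assume gt: "Pch M u \<Gamma>0 ?\<delta>s alpha eps_s {j} > Pch M u \<Gamma>0 ?\<delta>t alpha eps_t {j}"
    show "(-1::real) ^ (if j \<in> D GA then 1 else 0) * (xs GA \<bullet> \<beta>0 - xt GA \<bullet> \<beta>0) < 0
            \<or> (-1::real) ^ (if j \<in> D GB then 1 else 0) * (xs GB \<bullet> \<beta>0 - xt GB \<bullet> \<beta>0) < 0"
    proof (rule ccontr)
      assume "\<not> ?thesis"
      then have dirs: "j \<in> D l \<Longrightarrow> ?\<delta>s l \<le> ?\<delta>t l" "j \<notin> D l \<Longrightarrow> ?\<delta>t l \<le> ?\<delta>s l" for l
        by (cases l; auto)+
      have "Pch M u \<Gamma>0 ?\<delta>s alpha eps_t {j} \<le> Pch M u \<Gamma>0 ?\<delta>t alpha eps_t {j}"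
        by (rule Pch_single_mono[OF fin meas_alpha meas_eps_t meas_u monotone]) (use dirs in auto)
      with gt shift[of "{j}"] show False by simp
    qed
  next
    fix l :: good
    assume gt: "Pch M u \<Gamma>0 ?\<delta>s alpha eps_s (D l) > Pch M u \<Gamma>0 ?\<delta>t alpha eps_t (D l)"
    show "xs l \<bullet> \<beta>0 - xt l \<bullet> \<beta>0 > 0 \<or> sgn \<Gamma>0 * (xs (other l) \<bullet> \<beta>0 - xt (other l) \<bullet> \<beta>0) > 0"
    proof (rule ccontr)
      assume "\<not> ?thesis"
      then have "Pch M u \<Gamma>0 ?\<delta>s alpha eps_t (D l) \<le> Pch M u \<Gamma>0 ?\<delta>t alpha eps_t (D l)"
        by (intro Pch_D_mono[OF fin meas_alpha meas_eps_t meas_u monotone no_ties_t])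
          (auto simp: sgn_if split: if_splits)
      with gt shift[of "D l"] show False by simp
    qed
  qed
qed

end
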